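(* Let $\mathcal P$ be a solvable finite-dimensional Poisson $n$-Lie algebra of dimension $m$ over an algebraically closed field of characteristic zero. Then there is a chain of ideals $0=\mathcal P_0\subset\mathcal P_1\subset\cdots\subset\mathcal P_m=\mathcal P$ with $\dim\mathcal P_i=i$ for all $i$.
   Context: A Poisson $n$-Lie algebra is a commutative associative algebra $(\mathcal P,\cdot)$ with an $n$-linear skew-symmetric bracket satisfying the fundamental identity $[x_1,\dots,x_{n-1},[y_1,\dots,y_n]]=\sum_{i=1}^n[y_1,\dots,[x_1,\dots,x_{n-1},y_i],\dots,y_n]$ and the Leibniz rule $[y\cdot z,x_2,\dots,x_n]=y\cdot[z,x_2,\dots,x_n]+z\cdot[y,x_2,\dots,x_n]$. An ideal is a subspace $\mathcal I$ with $\mathcal P\cdot\mathcal I\subseteq\mathcal I$ and $[\mathcal I,\mathcal P,\dots,\mathcal P]\subseteq\mathcal I$. $\mathcal P$ is solvable if $\mathcal P^{(s)}=0$ for some $s$, where $\mathcal P^{(1)}=\mathcal P$, $\mathcal P^{(k+1)}=[\mathcal P^{(k)},\mathcal P^{(k)},\mathcal P,\dots,\mathcal P]+\mathcal P^{(k)}\cdot\mathcal P^{(k)}$ (linear spans). *)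

theory Defs
  imports Main "HOL-Computational_Algebra.Polynomial"
begin

definition alg_closed :: "'k::field itself \<Rightarrow> bool" where
  "alg_closed _ \<longleftrightarrow> (\<forall>p :: 'k poly. degree p \<ge> 1 \<longrightarrow> (\<exists>x. poly p x = 0))"

text \<open>A Poisson n-Lie algebra structure on the commutative associative (not necessarily unital)
  algebra 'v (ring operations from the class comm_ring) over the field 'k with scalar
  multiplication scale.  The n-ary bracket is a function on lists of length n.\<close>
definition poisson_nlie ::
  "('k::field \<Rightarrow> 'v::comm_ring \<Rightarrow> 'v) \<Rightarrow> nat \<Rightarrow> ('v list \<Rightarrow> 'v) \<Rightarrow> bool" where
  "poisson_nlie scale n br \<longleftrightarrow>
     vector_space scale \<and>
     (\<forall>a x y. scale a (x * y) = scale a x * y) \<and>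
     n \<ge> 2 \<and>
     (\<forall>xs i. length xs = n \<longrightarrow> i < n \<longrightarrow>
        Vector_Spaces.linear scale scale (\<lambda>x. br (xs[i := x]))) \<and>
     (\<forall>xs i j. length xs = n \<longrightarrow> i < n \<longrightarrow> j < n \<longrightarrow> i \<noteq> j \<longrightarrow>
        br (xs[i := xs ! j, j := xs ! i]) = - br xs) \<and>
     (\<forall>xs ys. length xs = n - 1 \<longrightarrow> length ys = n \<longrightarrow>
        br (xs @ [br ys]) = (\<Sum>i<n. br (ys[i := br (xs @ [ys ! i])]))) \<and>
     (\<forall>y z xs. length xs = n - 1 \<longrightarrow>
        br ((y * z) # xs) = y * br (z # xs) + z * br (y # xs))"

definition pn_ideal ::
  "('k::field \<Rightarrow> 'v::comm_ring \<Rightarrow> 'v) \<Rightarrow> nat \<Rightarrow> ('v list \<Rightarrow> 'v) \<Rightarrow> 'v set \<Rightarrow> bool" where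
  "pn_ideal scale n br I \<longleftrightarrow>
     module.subspace scale I \<and>
     (\<forall>p x. x \<in> I \<longrightarrow> p * x \<in> I) \<and>
     (\<forall>x xs. x \<in> I \<longrightarrow> length xs = n - 1 \<longrightarrow> br (x # xs) \<in> I)"

text \<open>Derived series: derived 0 = P (the paper's P^(1)), and
  derived (k+1) = span([D,D,P,...,P] \<union> D\<cdot>D).\<close>
primrec derived ::
  "('k::field \<Rightarrow> 'v::comm_ring \<Rightarrow> 'v) \<Rightarrow> nat \<Rightarrow> ('v list \<Rightarrow> 'v) \<Rightarrow> nat \<Rightarrow> 'v set" where
  "derived scale n br 0 = UNIV"
| "derived scale n br (Suc k) =
     module.span scale
       ({br (a # b # zs) | a b zs. a \<in> derived scale n br k \<and> b \<in> derived scale n br k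
                                  \<and> length zs = n - 2}
        \<union> {a * b | a b. a \<in> derived scale n br k \<and> b \<in> derived scale n br k})"

definition pn_solvable ::
  "('k::field \<Rightarrow> 'v::comm_ring \<Rightarrow> 'v) \<Rightarrow> nat \<Rightarrow> ('v list \<Rightarrow> 'v) \<Rightarrow> bool" where
  "pn_solvable scale n br \<longleftrightarrow> (\<exists>s. derived scale n br s = {0})"

end

(*
  The ideals of P are exactly the subspaces invariant under the multiplication operators
  L_a = (\<lambda>v. a * v) and the operators ad(x_1, ..., x_(n-1)) = [x_1, ..., x_(n-1), -].  By the
  Leibniz rule and the fundamental identity these operators span a Lie algebra g of linear maps,
  and solvability of P makes g solvable: the commutator of two operators with an argument in
  P^(k) is a sum of operators with an argument in P^(k+1) or with two arguments in P^(k).  Lie's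
  theorem applied to the action of g on P/J, for an ideal J \<noteq> P, yields a common eigenvector v,
  and J + span v is again an ideal; starting from J = 0 this builds the flag.

  Lie's theorem is proved for maps acting modulo a subspace U.  In the invariance lemma the
  classical trace argument is replaced by a nilpotency argument: if t is nilpotent and
  [t, [t, x]] = 0 then [t^m, x] = m [t, x] t^(m-1), which in characteristic zero forces
  [t, x] to have a nonzero kernel.
*)
theory Submission
  imports Defs
begin

section \<open>Linear maps modulo a subspace\<close>

lemma funpow_closed:
  assumes "f ` A \<subseteq> A" and "x \<in> A"
  shows "(f ^^ n) x \<in> A"
  using assms by (induction n) auto

definition commutator :: "('v::minus \<Rightarrow> 'v) \<Rightarrow> ('v \<Rightarrow> 'v) \<Rightarrow> 'v \<Rightarrow> 'v" where
  "commutator a b = (\<lambda>v. a (b v) - b (a v))"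

(* Quotients V/U are never formed: a statement about the maps induced on W/U is phrased for
   subspaces U \<subseteq> W of V, and congruence modulo U is written as membership of differences in U. *)
locale vector_space_endo = vector_space scale
  for scale :: "'a::field \<Rightarrow> 'b::ab_group_add \<Rightarrow> 'b" (infixr "*s" 75)
begin

sublocale endo: vector_space_pair scale scale ..

abbreviation lin :: "('b \<Rightarrow> 'b) \<Rightarrow> bool" where
  "lin T \<equiv> Vector_Spaces.linear scale scale T"

lemma lin_minus_scale: "lin T \<Longrightarrow> lin (\<lambda>v. T v - c *s v)"
  by (intro endo.linear_compose_sub endo.linear_compose_scale_right linear_ident)

lemma lin_mem_subspace_of_span:
  assumes "lin T" "subspace A" "T ` G \<subseteq> A" "v \<in> span G"
  shows "T v \<in> A"
proof -
  have "T v \<in> span (T ` G)"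
    using endo.linear_span_image[OF assms(1)] assms(4) by blast
  also have "span (T ` G) \<subseteq> A"
    using assms(3,2) by (rule span_minimal)
  finally show ?thesis .
qed

lemma scale_mem_subspace_iff:
  assumes "subspace U" "c \<noteq> 0"
  shows "c *s y \<in> U \<longleftrightarrow> y \<in> U"
proof
  assume "c *s y \<in> U"
  then have "inverse c *s (c *s y) \<in> U" by (rule subspace_scale[OF assms(1)])
  then show "y \<in> U" using assms(2) by simp
qed (rule subspace_scale[OF assms(1)])

lemma minus_scale_image_subset:
  assumes "subspace U" "S ` U \<subseteq> U"
  shows "(\<lambda>v. S v - c *s v) ` U \<subseteq> U"
  using assms subspace_diff subspace_scale by blast

definition poly_app :: "'a poly \<Rightarrow> ('b \<Rightarrow> 'b) \<Rightarrow> 'b \<Rightarrow> 'b" where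
  "poly_app p T w = (\<Sum>i\<le>degree p. coeff p i *s (T ^^ i) w)"

lemma poly_app_eq_sum:
  assumes "degree p < N"
  shows "poly_app p T w = (\<Sum>i<N. coeff p i *s (T ^^ i) w)"
  unfolding poly_app_def
  by (rule sum.mono_neutral_left) (use assms in \<open>auto simp: coeff_eq_0\<close>)

lemma poly_app_add: "poly_app (p + q) T w = poly_app p T w + poly_app q T w"
proof -
  define N where "N = Suc (max (degree p) (degree q))"
  have "degree (p + q) < N" "degree p < N" "degree q < N"
    using degree_add_le_max[of p q] unfolding N_def by linarith+
  then show ?thesis
    by (simp add: poly_app_eq_sum[of _ N] scale_left_distrib sum.distrib)
qed

lemma poly_app_smult: "poly_app (smult c p) T w = c *s poly_app p T w"
proof -
  have "degree (smult c p) < Suc (degree p)"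
    using degree_smult_le[of c p] by linarith
  then show ?thesis
    by (simp add: poly_app_eq_sum[of _ "Suc (degree p)"] scale_sum_right lessThan_Suc_atMost)
qed

lemma poly_app_monom: "poly_app (monom c K) T w = c *s (T ^^ K) w"
proof -
  have "degree (monom c K) < Suc K"
    by (simp add: degree_monom_le le_imp_less_Suc)
  then have "poly_app (monom c K) T w = (\<Sum>i<Suc K. coeff (monom c K) i *s (T ^^ i) w)"
    by (rule poly_app_eq_sum)
  also have "\<dots> = (\<Sum>i<Suc K. if i = K then c *s (T ^^ K) w else 0)"
    by (rule sum.cong) (auto simp: coeff_monom)
  finally show ?thesis by simp
qed

lemma poly_app_const: "poly_app [:c:] T w = c *s w"
  by (simp add: poly_app_def)

lemma poly_app_pCons_0:
  assumes "lin T"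
  shows "poly_app (pCons 0 q) T w = T (poly_app q T w)"
proof -
  have "degree (pCons 0 q) < Suc (Suc (degree q))"
    by (simp add: le_imp_less_Suc)
  then have "poly_app (pCons 0 q) T w = (\<Sum>i<Suc (Suc (degree q)). coeff (pCons 0 q) i *s (T ^^ i) w)"
    by (rule poly_app_eq_sum)
  also have "\<dots> = (\<Sum>i\<le>degree q. coeff q i *s (T ^^ Suc i) w)"
    by (subst sum.lessThan_Suc_shift) (simp add: lessThan_Suc_atMost)
  also have "\<dots> = T (poly_app q T w)"
    by (simp add: poly_app_def endo.linear_sum[OF assms] endo.linear_scale[OF assms])
  finally show ?thesis .
qed

lemma poly_app_linear_factor:
  assumes "lin T"
  shows "poly_app ([:-r, 1:] * q) T w = T (poly_app q T w) - r *s poly_app q T w"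
proof -
  have factor: "[:-r, 1:] * q = smult (-r) q + pCons 0 q" by simp
  show ?thesis
    unfolding factor poly_app_add poly_app_smult poly_app_pCons_0[OF assms] by (simp add: scale_minus_left)
qed

lemma poly_app_closed:
  assumes "subspace E" "w \<in> E" "T ` E \<subseteq> E"
  shows "poly_app p T w \<in> E"
  unfolding poly_app_def using assms
  by (intro subspace_sum subspace_scale) (auto intro: funpow_closed)

definition krylov :: "'b set \<Rightarrow> ('b \<Rightarrow> 'b) \<Rightarrow> 'b \<Rightarrow> nat \<Rightarrow> 'b set" where
  "krylov U T w i = span (U \<union> {(T ^^ l) w | l. l < i})"

lemma subspace_krylov [simp]: "subspace (krylov U T w i)"
  by (simp add: krylov_def)

lemma krylov_0: "subspace U \<Longrightarrow> krylov U T w 0 = U"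
  by (simp add: krylov_def)

lemma krylov_Suc: "krylov U T w (Suc i) = span (insert ((T ^^ i) w) (U \<union> {(T ^^ l) w | l. l < i}))"
proof -
  have "U \<union> {(T ^^ l) w | l. l < Suc i} = insert ((T ^^ i) w) (U \<union> {(T ^^ l) w | l. l < i})"
    by (auto simp: less_Suc_eq)
  then show ?thesis by (simp add: krylov_def)
qed

lemma krylov_superset: "U \<subseteq> krylov U T w i"
  unfolding krylov_def using span_superset by blast

lemma power_mem_krylov: "l < i \<Longrightarrow> (T ^^ l) w \<in> krylov U T w i"
  unfolding krylov_def by (rule span_base) blast

lemma krylov_mono: "i \<le> j \<Longrightarrow> krylov U T w i \<subseteq> krylov U T w j"
  unfolding krylov_def by (rule span_mono) auto

lemma krylov_subset:
  assumes "subspace E" "U \<subseteq> E" "w \<in> E" "T ` E \<subseteq> E"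
  shows "krylov U T w i \<subseteq> E"
  unfolding krylov_def using assms funpow_closed[of T E w] by (intro span_minimal) auto

lemma krylov_Suc_eq:
  assumes "(T ^^ i) w \<in> krylov U T w i"
  shows "krylov U T w (Suc i) = krylov U T w i"
  using span_redundant[OF assms[unfolded krylov_def]] unfolding krylov_Suc by (simp add: krylov_def)

lemma krylov_step:
  assumes T: "lin T" "T ` U \<subseteq> U" and v: "v \<in> krylov U T w i"
  shows "T v \<in> krylov U T w (Suc i)"
proof (rule lin_mem_subspace_of_span[OF T(1) subspace_krylov _ v[unfolded krylov_def]], rule image_subsetI)
  fix g assume "g \<in> U \<union> {(T ^^ l) w | l. l < i}"
  then consider "g \<in> U" | l where "l < i" "g = (T ^^ l) w" by blast
  then show "T g \<in> krylov U T w (Suc i)"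
  proof cases
    case 1
    then show ?thesis using T(2) krylov_superset by blast
  next
    case 2
    then show ?thesis using power_mem_krylov[of "Suc l" "Suc i"] by simp
  qed
qed

lemma krylov_invariant:
  assumes "lin T" "T ` U \<subseteq> U" "(T ^^ K) w \<in> krylov U T w K" "v \<in> krylov U T w K"
  shows "T v \<in> krylov U T w K"
  using krylov_step[OF assms(1,2,4)] krylov_Suc_eq[OF assms(3)] by simp

lemma mem_krylov_imp_poly:
  assumes U: "subspace U"
  shows "v \<in> krylov U T w K \<Longrightarrow> \<exists>p. (\<forall>i\<ge>K. coeff p i = 0) \<and> v - poly_app p T w \<in> U"
proof (induction K arbitrary: v)
  case 0
  then show ?case using krylov_0[OF U] by (intro exI[of _ 0]) (simp add: poly_app_def)
next
  case (Suc K)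
  from Suc.prems obtain k where "v - k *s (T ^^ K) w \<in> krylov U T w K"
    unfolding krylov_Suc span_breakdown_eq by (auto simp: krylov_def)
  then obtain p where p: "\<forall>i\<ge>K. coeff p i = 0" "v - k *s (T ^^ K) w - poly_app p T w \<in> U"
    using Suc.IH by blast
  have "\<forall>i\<ge>Suc K. coeff (p + monom k K) i = 0"
    using p(1) by (auto simp: coeff_monom)
  moreover have "v - poly_app (p + monom k K) T w = v - k *s (T ^^ K) w - poly_app p T w"
    by (simp add: poly_app_add poly_app_monom algebra_simps)
  ultimately show ?case using p(2) by metis
qed

lemma krylov_triangular:
  assumes U: "subspace U" and x: "lin x" "x ` U \<subseteq> U"
    and base: "\<And>S. S \<in> F \<Longrightarrow> S w - \<mu> S *s w \<in> U"
    and step: "\<And>i. \<forall>S\<in>F. S ((x ^^ i) w) - \<mu> S *s (x ^^ i) w \<in> krylov U x w i \<Longrightarrow>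
                  \<forall>S\<in>F. commutator S x ((x ^^ i) w) \<in> krylov U x w (Suc i)"
  shows "\<forall>S\<in>F. S ((x ^^ i) w) - \<mu> S *s (x ^^ i) w \<in> krylov U x w i"
proof (induction i)
  case 0
  then show ?case using base krylov_0[OF U] by simp
next
  case (Suc i)
  show ?case
  proof
    fix S assume S: "S \<in> F"
    define a where "a = (x ^^ i) w"
    have eq: "S ((x ^^ Suc i) w) - \<mu> S *s (x ^^ Suc i) w = x (S a - \<mu> S *s a) + commutator S x a"
      by (simp add: a_def commutator_def endo.linear_diff[OF x(1)] endo.linear_scale[OF x(1)])
    have "x (S a - \<mu> S *s a) \<in> krylov U x w (Suc i)"
      using krylov_step[OF x] Suc.IH S a_def by blast
    moreover have "commutator S x a \<in> krylov U x w (Suc i)"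
      using step[OF Suc.IH] S a_def by blast
    ultimately show "S ((x ^^ Suc i) w) - \<mu> S *s (x ^^ Suc i) w \<in> krylov U x w (Suc i)"
      unfolding eq by (rule subspace_add[OF subspace_krylov])
  qed
qed

lemma krylov_triangular_of_scalar_commutator:
  assumes U: "subspace U" and x: "lin x" "x ` U \<subseteq> U" "x ` W \<subseteq> W" and w: "w \<in> W"
    and base: "S w - \<mu> *s w \<in> U" and comm: "\<And>v. v \<in> W \<Longrightarrow> commutator S x v - c *s v \<in> U"
  shows "S ((x ^^ i) w) - \<mu> *s (x ^^ i) w \<in> krylov U x w i"
proof -
  have "\<forall>S'\<in>{S}. S' ((x ^^ i) w) - (\<lambda>_. \<mu>) S' *s (x ^^ i) w \<in> krylov U x w i"
  proof (rule krylov_triangular[OF U x(1,2)])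
    show "S' w - (\<lambda>_. \<mu>) S' *s w \<in> U" if "S' \<in> {S}" for S'
      using that base by simp
    fix i
    have "commutator S x ((x ^^ i) w) - c *s (x ^^ i) w \<in> krylov U x w (Suc i)"
      using comm[OF funpow_closed[OF x(3) w]] krylov_superset by blast
    moreover have "c *s (x ^^ i) w \<in> krylov U x w (Suc i)"
      by (rule subspace_scale[OF subspace_krylov power_mem_krylov]) simp
    ultimately have "(commutator S x ((x ^^ i) w) - c *s (x ^^ i) w) + c *s (x ^^ i) w \<in> krylov U x w (Suc i)"
      by (rule subspace_add[OF subspace_krylov])
    then show "\<forall>S'\<in>{S}. commutator S' x ((x ^^ i) w) \<in> krylov U x w (Suc i)"
      by simp
  qed
  then show ?thesis by simp
qed

lemma krylov_triangular_of_commutator_closed: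
  assumes U: "subspace U" and x: "lin x" "x ` U \<subseteq> U" "\<And>S. S \<in> F \<Longrightarrow> commutator S x \<in> F"
    and base: "\<And>S. S \<in> F \<Longrightarrow> S w - \<mu> S *s w \<in> U" and S: "S \<in> F"
  shows "S ((x ^^ i) w) - \<mu> S *s (x ^^ i) w \<in> krylov U x w i"
proof -
  have "\<forall>S\<in>F. S ((x ^^ i) w) - \<mu> S *s (x ^^ i) w \<in> krylov U x w i"
  proof (rule krylov_triangular[where F = F and \<mu> = \<mu>, OF U x(1,2) base])
    fix i assume IH: "\<forall>S\<in>F. S ((x ^^ i) w) - \<mu> S *s (x ^^ i) w \<in> krylov U x w i"
    show "\<forall>S\<in>F. commutator S x ((x ^^ i) w) \<in> krylov U x w (Suc i)"
    proof
      fix S assume "S \<in> F"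
      then have "commutator S x ((x ^^ i) w) - \<mu> (commutator S x) *s (x ^^ i) w \<in> krylov U x w (Suc i)"
        using IH x(3) krylov_mono[of i "Suc i" U x w] by auto
      moreover have "\<mu> (commutator S x) *s (x ^^ i) w \<in> krylov U x w (Suc i)"
        by (rule subspace_scale[OF subspace_krylov power_mem_krylov]) simp
      ultimately show "commutator S x ((x ^^ i) w) \<in> krylov U x w (Suc i)"
        using subspace_add[OF subspace_krylov] by fastforce
    qed
  qed
  then show ?thesis using S by blast
qed

lemma krylov_lowered_by_triangular:
  assumes U: "subspace U" and S: "lin S" "S ` U \<subseteq> U"
    and tri: "\<And>i. S ((x ^^ i) w) - \<mu> *s (x ^^ i) w \<in> krylov U x w i"
    and v: "v \<in> krylov U x w (Suc i)"
  shows "S v - \<mu> *s v \<in> krylov U x w i"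
proof (rule lin_mem_subspace_of_span[OF lin_minus_scale[OF S(1)] subspace_krylov _ v[unfolded krylov_def]],
    rule image_subsetI)
  fix g assume "g \<in> U \<union> {(x ^^ l) w | l. l < Suc i}"
  then consider "g \<in> U" | l where "l < Suc i" "g = (x ^^ l) w" by blast
  then show "S g - \<mu> *s g \<in> krylov U x w i"
  proof cases
    case 1
    then show ?thesis using minus_scale_image_subset[OF U S(2)] krylov_superset by blast
  next
    case 2
    then show ?thesis using tri[of l] krylov_mono[of l i] by auto
  qed
qed

lemma krylov_nilpotent_of_triangular:
  assumes U: "subspace U" and S: "lin S" "S ` U \<subseteq> U"
    and tri: "\<And>i. S ((x ^^ i) w) - \<mu> *s (x ^^ i) w \<in> krylov U x w i"
  shows "v \<in> krylov U x w i \<Longrightarrow> ((\<lambda>v. S v - \<mu> *s v) ^^ i) v \<in> U"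
proof (induction i arbitrary: v)
  case 0
  then show ?case using krylov_0[OF U] by simp
next
  case (Suc i)
  have "((\<lambda>v. S v - \<mu> *s v) ^^ Suc i) v = ((\<lambda>v. S v - \<mu> *s v) ^^ i) (S v - \<mu> *s v)"
    by (simp only: funpow_Suc_right o_apply)
  then show ?case
    using Suc.IH krylov_lowered_by_triangular[OF U S tri Suc.prems] by simp
qed

lemma gen_eigenvalue_eq_0_of_kernel_vector:
  assumes U: "subspace U" and z: "lin z" "z ` U \<subseteq> U"
    and y: "y \<notin> U" "z y \<in> U" and nil: "((\<lambda>v. z v - c *s v) ^^ K) y \<in> U"
  shows "c = 0"
proof (rule ccontr)
  assume c: "c \<noteq> 0"
  define t where "t = (\<lambda>v. z v - c *s v)"
  have t_U: "t u \<in> U" if "u \<in> U" for u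
    using minus_scale_image_subset[OF U z(2)] that unfolding t_def by blast
  have power: "(t ^^ k) y - (-c) ^ k *s y \<in> U" for k
  proof (induction k)
    case 0
    then show ?case using subspace_0[OF U] by simp
  next
    case (Suc k)
    have eq: "(t ^^ Suc k) y - (-c) ^ Suc k *s y = t ((t ^^ k) y - (-c) ^ k *s y) + (-c) ^ k *s z y"
      by (simp add: t_def endo.linear_diff[OF z(1)] endo.linear_scale[OF z(1)]
          scale_right_diff_distrib algebra_simps)
    have "t ((t ^^ k) y - (-c) ^ k *s y) \<in> U"
      using Suc.IH by (rule t_U)
    moreover have "(-c) ^ k *s z y \<in> U"
      using y(2) by (rule subspace_scale[OF U])
    ultimately show ?case
      unfolding eq by (rule subspace_add[OF U])
  qed
  have "(t ^^ K) y - ((t ^^ K) y - (-c) ^ K *s y) \<in> U"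
    by (rule subspace_diff[OF U nil[folded t_def] power])
  then have "(-c) ^ K *s y \<in> U" by simp
  moreover have "(-c) ^ K \<noteq> 0" using c by simp
  ultimately show False using y(1) scale_mem_subspace_iff[OF U] by blast
qed

lemma commutator_power_mod:
  assumes U: "subspace U" and t: "lin t" "t ` N \<subseteq> N" "t ` U \<subseteq> U"
    and tx: "\<And>v. v \<in> N \<Longrightarrow> commutator t x v - z v \<in> U"
    and tz: "\<And>v. v \<in> N \<Longrightarrow> commutator t z v \<in> U"
    and v: "v \<in> N"
  shows "(t ^^ Suc k) (x v) - x ((t ^^ Suc k) v) - of_nat (Suc k) *s z ((t ^^ k) v) \<in> U"
proof (induction k)
  case 0
  then show ?case using tx[OF v] by (simp add: commutator_def)
next
  case (Suc k)
  define c :: 'a where "c = of_nat (Suc k)"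
  define a where "a = (t ^^ Suc k) (x v)"
  define m where "m = (t ^^ k) v"
  have m_N: "m \<in> N" "t m \<in> N"
    using funpow_closed[OF t(2) v] t(2) unfolding m_def by auto
  have unfold: "(t ^^ Suc (Suc k)) (x v) = t a" "(t ^^ Suc (Suc k)) v = t (t m)"
    "(t ^^ Suc k) v = t m" "of_nat (Suc (Suc k)) = c + 1"
    by (simp_all add: a_def m_def c_def)
  have "(t ^^ Suc (Suc k)) (x v) - x ((t ^^ Suc (Suc k)) v) - of_nat (Suc (Suc k)) *s z ((t ^^ Suc k) v)
      = t (a - x (t m) - c *s z m) + (commutator t x (t m) - z (t m)) + c *s commutator t z m"
    unfolding unfold commutator_def
    by (simp add: endo.linear_diff[OF t(1)] endo.linear_add[OF t(1)] endo.linear_scale[OF t(1)] scale_left_distrib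
        scale_right_diff_distrib algebra_simps)
  moreover have "t (a - x (t m) - c *s z m) \<in> U"
    using Suc.IH t(3) unfolding unfold a_def m_def c_def by blast
  moreover have "commutator t x (t m) - z (t m) \<in> U"
    using tx m_N by blast
  moreover have "c *s commutator t z m \<in> U"
    using tz m_N subspace_scale[OF U] by blast
  ultimately show ?case by (metis subspace_add[OF U])
qed

definition weight_space ::
    "'b set \<Rightarrow> 'b set \<Rightarrow> ('b \<Rightarrow> 'b) set \<Rightarrow> (('b \<Rightarrow> 'b) \<Rightarrow> 'a) \<Rightarrow> 'b set" where
  "weight_space U W F \<mu> = {v \<in> W. \<forall>T\<in>F. T v - \<mu> T *s v \<in> U}"

lemma subspace_weight_space:
  assumes "subspace U" "subspace W" "\<And>T. T \<in> F \<Longrightarrow> lin T"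
  shows "subspace (weight_space U W F \<mu>)"
proof -
  have "weight_space U W F \<mu> = W \<inter> \<Inter> ((\<lambda>T. (\<lambda>v. T v - \<mu> T *s v) -` U) ` F)"
    by (auto simp: weight_space_def)
  then show ?thesis
    using assms endo.linear_subspace_vimage[OF lin_minus_scale]
    by (auto intro!: subspace_inter subspace_Inter)
qed

lemma weight_space_superset:
  assumes "subspace U" "U \<subseteq> W" "\<And>T. T \<in> F \<Longrightarrow> T ` U \<subseteq> U"
  shows "U \<subseteq> weight_space U W F \<mu>"
proof
  fix u assume u: "u \<in> U"
  have "T u - \<mu> T *s u \<in> U" if "T \<in> F" for T
    using minus_scale_image_subset[OF assms(1) assms(3)[OF that]] u by blast
  then show "u \<in> weight_space U W F \<mu>"
    using u assms(2) unfolding weight_space_def by blast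
qed

lemma weight_space_invariant_of_commuting:
  assumes U: "subspace U" and S: "lin S" "S ` W \<subseteq> W" "S ` U \<subseteq> U"
    and comm: "\<And>T v. T \<in> F \<Longrightarrow> v \<in> W \<Longrightarrow> commutator T S v \<in> U"
  shows "S ` weight_space U W F \<mu> \<subseteq> weight_space U W F \<mu>"
proof (rule image_subsetI)
  fix v assume "v \<in> weight_space U W F \<mu>"
  then have v: "v \<in> W" "\<And>T. T \<in> F \<Longrightarrow> T v - \<mu> T *s v \<in> U"
    unfolding weight_space_def by auto
  have "T (S v) - \<mu> T *s S v \<in> U" if T: "T \<in> F" for T
  proof -
    have "commutator T S v + S (T v - \<mu> T *s v) \<in> U"
      using comm[OF T v(1)] S(3) v(2)[OF T] subspace_add[OF U] by blast
    moreover have "commutator T S v + S (T v - \<mu> T *s v) = T (S v) - \<mu> T *s S v"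
      by (simp add: commutator_def endo.linear_diff[OF S(1)] endo.linear_scale[OF S(1)])
    ultimately show ?thesis by simp
  qed
  then show "S v \<in> weight_space U W F \<mu>"
    using S(2) v(1) unfolding weight_space_def by blast
qed

inductive_set op_span :: "('b \<Rightarrow> 'b) set \<Rightarrow> ('b \<Rightarrow> 'b) set" for A where
  zero: "(\<lambda>v. 0) \<in> op_span A"
| base: "a \<in> A \<Longrightarrow> a \<in> op_span A"
| add: "a \<in> op_span A \<Longrightarrow> b \<in> op_span A \<Longrightarrow> (\<lambda>v. a v + b v) \<in> op_span A"
| scale: "a \<in> op_span A \<Longrightarrow> (\<lambda>v. c *s a v) \<in> op_span A"

lemma op_span_sum:
  "finite I \<Longrightarrow> (\<And>i. i \<in> I \<Longrightarrow> f i \<in> op_span A) \<Longrightarrow> (\<lambda>v. \<Sum>i\<in>I. f i v) \<in> op_span A"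
proof (induction I rule: finite_induct)
  case empty
  then show ?case by (simp add: op_span.zero)
next
  case (insert x F)
  then show ?case
    using op_span.add[of "f x" A "\<lambda>v. \<Sum>i\<in>F. f i v"] by simp
qed

lemma op_span_mono: "A \<subseteq> B \<Longrightarrow> a \<in> op_span A \<Longrightarrow> a \<in> op_span B"
  by (erule op_span.induct) (auto intro: op_span.intros)

lemma lin_op_span:
  assumes "\<And>a. a \<in> A \<Longrightarrow> lin a"
  shows "a \<in> op_span A \<Longrightarrow> lin a"
  by (induction rule: op_span.induct)
    (auto intro: assms endo.linear_zero endo.linear_compose_add endo.linear_compose_scale_right)

lemma op_span_image_subset:
  assumes U: "subspace U" and A: "\<And>a. a \<in> A \<Longrightarrow> a ` U \<subseteq> U"
  shows "a \<in> op_span A \<Longrightarrow> a ` U \<subseteq> U"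
  by (induction rule: op_span.induct)
    (use A subspace_0[OF U] subspace_add[OF U] subspace_scale[OF U] in \<open>auto simp: image_subset_iff\<close>)

lemma op_span_vanishes:
  assumes "\<And>a v. a \<in> A \<Longrightarrow> a v = 0"
  shows "a \<in> op_span A \<Longrightarrow> a v = 0"
  by (induction rule: op_span.induct) (use assms in auto)

lemma commutator_op_span_left:
  assumes a: "lin a" and X: "\<And>x. x \<in> X \<Longrightarrow> commutator a x \<in> op_span B"
  shows "x \<in> op_span X \<Longrightarrow> commutator a x \<in> op_span B"
proof (induction rule: op_span.induct)
  case zero
  then show ?case
    using op_span.zero by (simp add: commutator_def endo.linear_0[OF a])
next
  case (base x)
  then show ?case by (rule X)
next
  case (add x y)
  then show ?case
    using op_span.add[OF add.IH]
    by (simp add: commutator_def endo.linear_add[OF a] algebra_simps)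
next
  case (scale x c)
  then show ?case
    using op_span.scale[OF scale.IH, of c]
    by (simp add: commutator_def endo.linear_scale[OF a] scale_right_diff_distrib)
qed

lemma commutator_op_span:
  assumes A: "\<And>a. a \<in> A \<Longrightarrow> lin a" and X: "\<And>x. x \<in> X \<Longrightarrow> lin x"
    and gen: "\<And>a x. a \<in> A \<Longrightarrow> x \<in> X \<Longrightarrow> commutator a x \<in> op_span B"
    and x: "x \<in> op_span X"
  shows "a \<in> op_span A \<Longrightarrow> commutator a x \<in> op_span B"
proof (induction rule: op_span.induct)
  case zero
  then show ?case
    using op_span.zero by (simp add: commutator_def endo.linear_0[OF lin_op_span[OF X x]])
next
  case (base a)
  then show ?case
    using commutator_op_span_left[OF A gen x] by blast
next
  case (add a b)
  then show ?case
    using op_span.add[OF add.IH]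
    by (simp add: commutator_def endo.linear_add[OF lin_op_span[OF X x]] algebra_simps)
next
  case (scale a c)
  then show ?case
    using op_span.scale[OF scale.IH, of c]
    by (simp add: commutator_def endo.linear_scale[OF lin_op_span[OF X x]] scale_right_diff_distrib)
qed

end

locale char_0_vector_space_endo = vector_space_endo scale
  for scale :: "'a::field_char_0 \<Rightarrow> 'b::ab_group_add \<Rightarrow> 'b" (infixr "*s" 75)
begin

lemma kernel_of_commutator_with_nilpotent:
  assumes U: "subspace U" and y0: "y0 \<in> N" "y0 \<notin> U"
    and t: "lin t" "t ` N \<subseteq> N" "t ` U \<subseteq> U" and x: "x ` N \<subseteq> N" "x ` U \<subseteq> U"
    and nil: "\<And>v. v \<in> N \<Longrightarrow> (t ^^ K) v \<in> U"
    and tx: "\<And>v. v \<in> N \<Longrightarrow> commutator t x v - z v \<in> U"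
    and tz: "\<And>v. v \<in> N \<Longrightarrow> commutator t z v \<in> U"
  shows "\<exists>y\<in>N. y \<notin> U \<and> z y \<in> U"
proof -
  define m where "m = (LEAST m. \<forall>v\<in>N. (t ^^ m) v \<in> U)"
  have m: "\<forall>v\<in>N. (t ^^ m) v \<in> U"
    unfolding m_def by (rule LeastI_ex) (use nil in blast)
  then obtain k where k: "m = Suc k"
    using y0 by (cases m) auto
  then have "\<not> (\<forall>v\<in>N. (t ^^ k) v \<in> U)"
    using not_less_Least[of k "\<lambda>m. \<forall>v\<in>N. (t ^^ m) v \<in> U"] unfolding m_def by simp
  then obtain v where v: "v \<in> N" "(t ^^ k) v \<notin> U" by blast
  have "(t ^^ m) (x v) - x ((t ^^ m) v) \<in> U"
    using m v x subspace_diff[OF U] by blast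
  then have "of_nat m *s z ((t ^^ k) v) \<in> U"
    using subspace_diff[OF U _ commutator_power_mod[OF U t tx tz v(1), of k]] k by fastforce
  moreover have "(of_nat m :: 'a) \<noteq> 0"
    unfolding k by (rule of_nat_neq_0)
  ultimately have "z ((t ^^ k) v) \<in> U"
    using scale_mem_subspace_iff[OF U] by blast
  then show ?thesis
    using v funpow_closed[OF t(2) v(1)] by blast
qed

lemma krylov_commutator_kernel:
  assumes U: "subspace U" and x: "lin x" "x ` U \<subseteq> U"
    and K: "(x ^^ K) w \<in> krylov U x w K" and w: "w \<notin> U"
    and T: "lin T" "T ` U \<subseteq> U" "\<And>i. T ((x ^^ i) w) - \<mu> *s (x ^^ i) w \<in> krylov U x w i"
    and z: "lin z"
      "\<And>v. v \<in> krylov U x w K \<Longrightarrow> commutator T x v - z v \<in> U"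
      "\<And>v. v \<in> krylov U x w K \<Longrightarrow> commutator T z v \<in> U"
  shows "\<exists>y \<in> krylov U x w K. y \<notin> U \<and> z y \<in> U"
proof (rule kernel_of_commutator_with_nilpotent[OF U _ w lin_minus_scale[OF T(1)] _
      minus_scale_image_subset[OF U T(2)] _ x(2)])
  let ?N = "krylov U x w K"
  have "K \<noteq> 0"
    using K w krylov_0[OF U] by (metis funpow_0)
  then show "w \<in> ?N"
    using power_mem_krylov[of 0 K] by simp
  show "(\<lambda>v. T v - \<mu> *s v) ` ?N \<subseteq> ?N"
    using krylov_lowered_by_triangular[OF U T] krylov_mono[of K "Suc K" U x w] by auto
  show "x ` ?N \<subseteq> ?N"
    using krylov_invariant[OF x K] by blast
  show "((\<lambda>v. T v - \<mu> *s v) ^^ K) v \<in> U" if "v \<in> ?N" for v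
    using krylov_nilpotent_of_triangular[OF U T] that .
  show "commutator (\<lambda>v. T v - \<mu> *s v) x v - z v \<in> U" if "v \<in> ?N" for v
    using z(2)[OF that] by (simp add: commutator_def endo.linear_diff[OF x(1)] endo.linear_scale[OF x(1)])
  show "commutator (\<lambda>v. T v - \<mu> *s v) z v \<in> U" if "v \<in> ?N" for v
    using z(3)[OF that] by (simp add: commutator_def endo.linear_diff[OF z(1)] endo.linear_scale[OF z(1)])
qed

end

section \<open>Lie's theorem\<close>

locale fin_dim_alg_closed_space =
  char_0_vector_space_endo scale + finite_dimensional_vector_space scale Basis
  for scale :: "'a::field_char_0 \<Rightarrow> 'b::ab_group_add \<Rightarrow> 'b" (infixr "*s" 75) and Basis :: "'b set" +
  assumes alg_closed: "alg_closed TYPE('a)"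
begin

lemma krylov_stabilizes: "\<exists>K. (T ^^ K) w \<in> krylov U T w K"
proof (rule ccontr)
  assume no_K: "\<nexists>K. (T ^^ K) w \<in> krylov U T w K"
  have "K \<le> dim (krylov U T w K)" for K
  proof (induction K)
    case (Suc K)
    have "dim (krylov U T w (Suc K)) = dim (krylov U T w K) + 1"
      using no_K unfolding krylov_Suc by (simp add: dim_insert krylov_def)
    then show ?case using Suc.IH by simp
  qed simp
  from this[of "Suc dimension"] show False
    using dim_subset_UNIV[of "krylov U T w (Suc dimension)"] by simp
qed

lemma eigenvector_of_annihilating_poly:
  assumes U: "subspace U" and E: "subspace E" and T: "lin T" "T ` E \<subseteq> E"
    and w: "w \<in> E" "w \<notin> U"
  shows "q \<noteq> 0 \<Longrightarrow> poly_app q T w \<in> U \<Longrightarrow> \<exists>\<mu> e. e \<in> E \<and> e \<notin> U \<and> T e - \<mu> *s e \<in> U"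
proof (induction "degree q" arbitrary: q rule: less_induct)
  case less
  show ?case
  proof (cases "degree q = 0")
    case True
    then obtain c where "q = [:c:]" "c \<noteq> 0"
      using less.prems(1) by (metis degree_eq_zeroE pCons_0_0)
    then show ?thesis
      using less.prems(2) w(2) scale_mem_subspace_iff[OF U] by (simp add: poly_app_const)
  next
    case False
    then have "degree q \<ge> 1" by simp
    then obtain r where "poly q r = 0"
      using alg_closed unfolding alg_closed_def by blast
    then obtain q' where q': "q = [:-r, 1:] * q'"
      by (auto simp: poly_eq_0_iff_dvd elim: dvdE)
    with less.prems(1) have "q' \<noteq> 0" by auto
    then have "degree q = Suc (degree q')"
      unfolding q' by (subst degree_mult_eq) auto
    then have deg: "degree q' < degree q" by simp
    define e where "e = poly_app q' T w"
    have "e \<in> E"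
      unfolding e_def using E w(1) T(2) by (rule poly_app_closed)
    show ?thesis
    proof (cases "e \<in> U")
      case True
      then show ?thesis using less.hyps[OF deg \<open>q' \<noteq> 0\<close>] e_def by blast
    next
      case False
      have "T e - r *s e \<in> U"
        using less.prems(2) unfolding q' poly_app_linear_factor[OF T(1)] e_def .
      then show ?thesis using \<open>e \<in> E\<close> False by blast
    qed
  qed
qed

lemma eigenvector_mod:
  assumes "subspace U" "subspace E" "lin T" "T ` E \<subseteq> E" "w \<in> E" "w \<notin> U"
  shows "\<exists>\<mu> e. e \<in> E \<and> e \<notin> U \<and> T e - \<mu> *s e \<in> U"
proof -
  obtain K where "(T ^^ K) w \<in> krylov U T w K"
    using krylov_stabilizes by blast
  then obtain p where p: "\<forall>i\<ge>K. coeff p i = 0" "(T ^^ K) w - poly_app p T w \<in> U"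
    using mem_krylov_imp_poly[OF assms(1)] by blast
  define q where "q = monom 1 K - p"
  have "coeff q K = 1"
    using p(1) by (simp add: q_def)
  then have "q \<noteq> 0" by auto
  have "poly_app (q + p) T w = (T ^^ K) w"
    by (simp add: q_def poly_app_monom)
  then have "poly_app q T w = (T ^^ K) w - poly_app p T w"
    by (simp add: poly_app_add eq_diff_eq)
  then show ?thesis
    using eigenvector_of_annihilating_poly[OF assms \<open>q \<noteq> 0\<close>] p(2) by simp
qed

lemma scalar_commutator_eq_0:
  assumes U: "subspace U" and W: "subspace W" "U \<subseteq> W" "\<not> W \<subseteq> U"
    and a: "lin a" "a ` W \<subseteq> W" "a ` U \<subseteq> U"
    and b: "lin b" "b ` W \<subseteq> W" "b ` U \<subseteq> U"
    and c: "\<And>v. v \<in> W \<Longrightarrow> commutator a b v - c *s v \<in> U"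
  shows "c = 0"
proof -
  obtain w0 where "w0 \<in> W" "w0 \<notin> U"
    using W(3) by blast
  then obtain \<mu> w where w: "w \<in> W" "w \<notin> U" "b w - \<mu> *s w \<in> U"
    using eigenvector_mod[OF U W(1) b(1,2)] by blast
  obtain K where K: "(a ^^ K) w \<in> krylov U a w K"
    using krylov_stabilizes by blast
  have ba: "commutator b a v - (- c) *s v \<in> U" if "v \<in> W" for v
  proof -
    have eq: "commutator b a v - (- c) *s v = - (commutator a b v - c *s v)"
      unfolding commutator_def scale_minus_left by (simp add: algebra_simps)
    show ?thesis
      unfolding eq using c[OF that] by (rule subspace_neg[OF U])
  qed
  have "\<exists>y \<in> krylov U a w K. y \<notin> U \<and> (- c) *s y \<in> U"
  proof (rule krylov_commutator_kernel[OF U a(1,3) K w(2) b(1,3)])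
    show "b ((a ^^ i) w) - \<mu> *s (a ^^ i) w \<in> krylov U a w i" for i
      using krylov_triangular_of_scalar_commutator[OF U a(1,3,2) w(1,3) ba] .
    show "lin (\<lambda>v. (- c) *s v)"
      by (rule endo.linear_compose_scale_right[OF linear_ident])
    show "commutator b a v - (- c) *s v \<in> U" if "v \<in> krylov U a w K" for v
      using ba krylov_subset[OF W(1,2) w(1) a(2)] that by blast
    show "commutator b (\<lambda>v. (- c) *s v) v \<in> U" for v
      by (simp add: commutator_def endo.linear_neg[OF b(1)] endo.linear_scale[OF b(1)] subspace_0[OF U])
  qed
  then obtain y where "y \<notin> U" "(- c) *s y \<in> U" by blast
  then show "c = 0"
    using scale_mem_subspace_iff[OF U, of "- c" y] neg_equal_0_iff_equal by blast
qed

lemma common_eigenvector_of_commuting: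
  assumes U: "subspace U" and W: "subspace W" "U \<subseteq> W" "\<not> W \<subseteq> U"
    and F: "\<And>T. T \<in> F \<Longrightarrow> lin T" "\<And>T. T \<in> F \<Longrightarrow> T ` W \<subseteq> W" "\<And>T. T \<in> F \<Longrightarrow> T ` U \<subseteq> U"
    and comm: "\<And>a b v. a \<in> F \<Longrightarrow> b \<in> F \<Longrightarrow> v \<in> W \<Longrightarrow> commutator a b v \<in> U"
  shows "\<exists>\<mu>. \<not> weight_space U W F \<mu> \<subseteq> U"
proof -
  define invariant where "invariant E \<longleftrightarrow>
    subspace E \<and> U \<subseteq> E \<and> E \<subseteq> W \<and> \<not> E \<subseteq> U \<and> (\<forall>T\<in>F. T ` E \<subseteq> E)" for E
  have "invariant W"
    using assms unfolding invariant_def by blast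
  \<comment> \<open>by minimality, E/U lies in a single eigenspace of each T \<in> F\<close>
  then obtain E where E: "invariant E" and min: "\<And>E'. invariant E' \<Longrightarrow> dim E \<le> dim E'"
    using ex_has_least_nat[of invariant W dim] by blast
  have E_props: "subspace E" "U \<subseteq> E" "E \<subseteq> W" "\<not> E \<subseteq> U" "\<And>T. T \<in> F \<Longrightarrow> T ` E \<subseteq> E"
    using E unfolding invariant_def by auto
  have "\<exists>c. E \<subseteq> weight_space U E {T} (\<lambda>_. c)" if T: "T \<in> F" for T
  proof -
    obtain c e where e: "e \<in> E" "e \<notin> U" "T e - c *s e \<in> U"
      using E_props(4) eigenvector_mod[OF U E_props(1) F(1)[OF T] E_props(5)[OF T]] by blast
    let ?E = "weight_space U E {T} (\<lambda>_. c)"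
    have "\<forall>S\<in>F. S ` ?E \<subseteq> ?E"
    proof
      fix S assume S: "S \<in> F"
      show "S ` ?E \<subseteq> ?E"
        using comm[OF T S] E_props(3)
        by (intro weight_space_invariant_of_commuting[OF U F(1)[OF S] E_props(5)[OF S] F(3)[OF S]]) auto
    qed
    moreover have "subspace ?E"
      using U E_props(1) F(1)[OF T] by (intro subspace_weight_space) auto
    moreover have "U \<subseteq> ?E"
      using U E_props(2) F(3)[OF T] by (intro weight_space_superset) auto
    moreover have "?E \<subseteq> W" "\<not> ?E \<subseteq> U"
      using E_props(3) e unfolding weight_space_def by auto
    ultimately have "invariant ?E"
      unfolding invariant_def by blast
    then have "?E = E"
      using min subspace_dim_equal[OF \<open>subspace ?E\<close> E_props(1)] unfolding weight_space_def by auto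
    then show ?thesis by auto
  qed
  then obtain \<mu> where "E \<subseteq> weight_space U E {T} (\<lambda>_. \<mu> T)" if "T \<in> F" for T
    by metis
  then have "E \<subseteq> weight_space U W F \<mu>"
    using E_props(3) unfolding weight_space_def by blast
  then show ?thesis
    using E_props(4) by blast
qed

lemma weight_of_commutator_eq_0:
  assumes U: "subspace U" and W: "subspace W" "U \<subseteq> W"
    and F: "\<And>T. T \<in> F \<Longrightarrow> lin T" "\<And>T. T \<in> F \<Longrightarrow> T ` U \<subseteq> U"
    and comm: "\<And>a b v. a \<in> F \<Longrightarrow> b \<in> F \<Longrightarrow> v \<in> W \<Longrightarrow> commutator a b v \<in> U"
    and x: "lin x" "x ` W \<subseteq> W" "x ` U \<subseteq> U" "\<And>T. T \<in> F \<Longrightarrow> commutator T x \<in> F"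
    and w: "w \<in> weight_space U W F \<mu>" "w \<notin> U" and T: "T \<in> F"
  shows "\<mu> (commutator T x) = 0"
proof -
  have w_W: "w \<in> W" and w_F: "\<And>S. S \<in> F \<Longrightarrow> S w - \<mu> S *s w \<in> U"
    using w(1) unfolding weight_space_def by auto
  obtain K where K: "(x ^^ K) w \<in> krylov U x w K"
    using krylov_stabilizes by blast
  have tri: "S ((x ^^ i) w) - \<mu> S *s (x ^^ i) w \<in> krylov U x w i" if "S \<in> F" for S i
    using krylov_triangular_of_commutator_closed[where F = F and \<mu> = \<mu>, OF U x(1,3,4) w_F that] .
  define z where "z = commutator T x"
  have z_F: "z \<in> F"
    unfolding z_def using T by (rule x(4))
  have "\<exists>y \<in> krylov U x w K. y \<notin> U \<and> z y \<in> U"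
  proof (rule krylov_commutator_kernel[OF U x(1,3) K w(2) F(1,2)[OF T] tri[OF T] F(1)[OF z_F]])
    show "commutator T x v - z v \<in> U" for v
      using subspace_0[OF U] by (simp add: z_def)
    show "commutator T z v \<in> U" if "v \<in> krylov U x w K" for v
      using comm[OF T z_F] that krylov_subset[OF W w_W x(2)] by blast
  qed
  then obtain y where y: "y \<in> krylov U x w K" "y \<notin> U" "z y \<in> U"
    by blast
  show ?thesis
    using gen_eigenvalue_eq_0_of_kernel_vector[OF U F(1,2)[OF z_F] y(2,3)]
      krylov_nilpotent_of_triangular[OF U F(1,2)[OF z_F] tri[OF z_F] y(1)]
    unfolding z_def .
qed

lemma weight_space_invariant:
  assumes U: "subspace U" and W: "subspace W" "U \<subseteq> W"
    and F: "\<And>T. T \<in> F \<Longrightarrow> lin T" "\<And>T. T \<in> F \<Longrightarrow> T ` U \<subseteq> U"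
    and comm: "\<And>a b v. a \<in> F \<Longrightarrow> b \<in> F \<Longrightarrow> v \<in> W \<Longrightarrow> commutator a b v \<in> U"
    and x: "lin x" "x ` W \<subseteq> W" "x ` U \<subseteq> U" "\<And>T. T \<in> F \<Longrightarrow> commutator T x \<in> F"
  shows "x ` weight_space U W F \<mu> \<subseteq> weight_space U W F \<mu>"
proof (rule image_subsetI)
  fix w assume w: "w \<in> weight_space U W F \<mu>"
  then have w_W: "w \<in> W" and w_F: "\<And>T. T \<in> F \<Longrightarrow> T w - \<mu> T *s w \<in> U"
    unfolding weight_space_def by auto
  have "T (x w) - \<mu> T *s x w \<in> U" if T: "T \<in> F" for T
  proof -
    have "commutator T x w \<in> U"
    proof (cases "w \<in> U")
      case True
      then show ?thesis
        using x(3) F(2)[OF T] subspace_diff[OF U] by (simp add: commutator_def image_subset_iff)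
    next
      case False
      then show ?thesis
        using weight_of_commutator_eq_0[OF U W F comm x w False T] w_F[OF x(4)[OF T]] by simp
    qed
    moreover have "T (x w) - \<mu> T *s x w = commutator T x w + x (T w - \<mu> T *s w)"
      by (simp add: commutator_def endo.linear_diff[OF x(1)] endo.linear_scale[OF x(1)])
    ultimately show ?thesis
      using x(3) w_F[OF T] subspace_add[OF U] by auto
  qed
  then show "x w \<in> weight_space U W F \<mu>"
    using x(2) w_W unfolding weight_space_def by auto
qed

lemma invariant_weight_space_exists:
  assumes U: "subspace U" and W: "subspace W" "U \<subseteq> W" "\<not> W \<subseteq> U"
    and g: "\<And>x. x \<in> g \<Longrightarrow> lin x" "\<And>x. x \<in> g \<Longrightarrow> x ` W \<subseteq> W" "\<And>x. x \<in> g \<Longrightarrow> x ` U \<subseteq> U"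
    and F: "F \<subseteq> g" "\<And>T x. T \<in> F \<Longrightarrow> x \<in> g \<Longrightarrow> commutator T x \<in> F"
    and F': "\<And>a b. a \<in> F \<Longrightarrow> b \<in> F \<Longrightarrow> commutator a b \<in> F'" "W \<subseteq> weight_space U W F' \<mu>'"
  shows "\<exists>\<mu>. \<not> weight_space U W F \<mu> \<subseteq> U \<and>
    (\<forall>x\<in>g. x ` weight_space U W F \<mu> \<subseteq> weight_space U W F \<mu>)"
proof -
  have comm: "commutator a b v \<in> U" if a: "a \<in> F" and b: "b \<in> F" and v: "v \<in> W" for a b v
  proof -
    have scalar: "commutator a b v - \<mu>' (commutator a b) *s v \<in> U" if "v \<in> W" for v
      using F'(2) F'(1)[OF a b] that unfolding weight_space_def by blast
    have "a \<in> g" "b \<in> g"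
      using a b F(1) by auto
    then have "\<mu>' (commutator a b) = 0"
      using scalar_commutator_eq_0[OF U W g(1,2,3) g(1,2,3) scalar] by blast
    then show ?thesis
      using scalar[OF v] by simp
  qed
  have F_g: "lin T" "T ` W \<subseteq> W" "T ` U \<subseteq> U" if "T \<in> F" for T
    using g F(1) that by blast+
  obtain \<mu> where "\<not> weight_space U W F \<mu> \<subseteq> U"
    using common_eigenvector_of_commuting[OF U W F_g comm] by blast
  moreover have "x ` weight_space U W F \<mu> \<subseteq> weight_space U W F \<mu>" if "x \<in> g" for x
    using weight_space_invariant[OF U W(1,2) F_g(1,3) comm g(1,2,3)[OF that] F(2)[OF _ that]] .
  ultimately show ?thesis by blast
qed

theorem lie_theorem_mod:
  assumes U: "subspace U" "U \<noteq> UNIV"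
    and g: "\<And>x. x \<in> g \<Longrightarrow> lin x" "\<And>x. x \<in> g \<Longrightarrow> x ` U \<subseteq> U"
    and S: "\<And>j. S j \<subseteq> g" "\<And>j T x. T \<in> S j \<Longrightarrow> x \<in> g \<Longrightarrow> commutator T x \<in> S j"
      "\<And>j a b. a \<in> S j \<Longrightarrow> b \<in> S j \<Longrightarrow> commutator a b \<in> S (Suc j)"
      "\<And>T v. T \<in> S s \<Longrightarrow> T v = 0"
  shows "\<exists>v. v \<notin> U \<and> (\<forall>T\<in>S 0. \<exists>c. T v - c *s v \<in> U)"
proof -
  \<comment> \<open>W/U is a nonzero g-invariant subspace of V/U on which every element of S j acts as a scalar\<close>
  define good where "good j \<longleftrightarrow> (\<exists>W \<mu>. subspace W \<and> U \<subseteq> W \<and> \<not> W \<subseteq> U \<and>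
    (\<forall>x\<in>g. x ` W \<subseteq> W) \<and> W \<subseteq> weight_space U W (S j) \<mu>)" for j
  have "good s"
    unfolding good_def weight_space_def
    using U by (intro exI[of _ UNIV] exI[of _ "\<lambda>_. 0"]) (auto simp: S(4) subspace_0)
  moreover have "good j" if prev: "good (Suc j)" for j
  proof -
    obtain W \<mu>' where W: "subspace W" "U \<subseteq> W" "\<not> W \<subseteq> U" "\<forall>x\<in>g. x ` W \<subseteq> W"
      "W \<subseteq> weight_space U W (S (Suc j)) \<mu>'"
      using prev unfolding good_def by blast
    have g_W: "x ` W \<subseteq> W" if "x \<in> g" for x
      using W(4) that by blast
    obtain \<mu> where \<mu>: "\<not> weight_space U W (S j) \<mu> \<subseteq> U"
      "\<forall>x\<in>g. x ` weight_space U W (S j) \<mu> \<subseteq> weight_space U W (S j) \<mu>"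
      using invariant_weight_space_exists[OF U(1) W(1,2,3) g(1) g_W g(2) S(1,2,3) W(5)] by blast
    have "subspace (weight_space U W (S j) \<mu>)"
      using U(1) W(1) S(1) g(1) by (intro subspace_weight_space) auto
    moreover have "U \<subseteq> weight_space U W (S j) \<mu>"
      using U(1) W(2) by (rule weight_space_superset) (use S(1) g(2) in blast)
    moreover have "weight_space U W (S j) \<mu> \<subseteq> weight_space U (weight_space U W (S j) \<mu>) (S j) \<mu>"
      unfolding weight_space_def by auto
    ultimately show "good j"
      unfolding good_def using \<mu> by blast
  qed
  ultimately have "good 0"
    by (rule zero_induct)
  then obtain W \<mu> where "\<not> W \<subseteq> U" "W \<subseteq> weight_space U W (S 0) \<mu>"
    unfolding good_def by blast
  then obtain v where "v \<notin> U" "\<forall>T\<in>S 0. T v - \<mu> T *s v \<in> U"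
    unfolding weight_space_def by blast
  then show ?thesis by blast
qed

end

section \<open>Poisson n-Lie algebras\<close>

definition mult_op :: "'v::times \<Rightarrow> 'v \<Rightarrow> 'v" where
  "mult_op a = (\<lambda>v. a * v)"

lemma commutator_mult_op:
  fixes a b :: "'v::comm_ring"
  shows "commutator (mult_op a) (mult_op b) = (\<lambda>v. 0)"
  by (simp add: commutator_def mult_op_def fun_eq_iff mult.left_commute[of a b])

locale poisson_nlie_algebra =
  fixes scale :: "'k::field \<Rightarrow> 'v::comm_ring \<Rightarrow> 'v" (infixr "*s" 75)
    and n :: nat and br :: "'v list \<Rightarrow> 'v"
  assumes poisson_nlie: "poisson_nlie scale n br"
begin

sublocale vector_space_endo scale
  using poisson_nlie unfolding poisson_nlie_def vector_space_endo_def by blast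

abbreviation is_ideal :: "'v set \<Rightarrow> bool" where
  "is_ideal I \<equiv> pn_ideal scale n br I"

abbreviation der :: "nat \<Rightarrow> 'v set" where
  "der k \<equiv> derived scale n br k"

lemma two_le_n: "2 \<le> n"
  using poisson_nlie unfolding poisson_nlie_def by blast

lemma scale_mult_left: "c *s (x * y) = (c *s x) * y"
  using poisson_nlie unfolding poisson_nlie_def by blast

lemma lin_br_nth: "length xs = n \<Longrightarrow> i < n \<Longrightarrow> lin (\<lambda>x. br (xs[i := x]))"
  using poisson_nlie unfolding poisson_nlie_def by blast

lemma br_swap:
  "length xs = n \<Longrightarrow> i < n \<Longrightarrow> j < n \<Longrightarrow> i \<noteq> j \<Longrightarrow> br (xs[i := xs ! j, j := xs ! i]) = - br xs"
  using poisson_nlie unfolding poisson_nlie_def by blast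

lemma fundamental_identity:
  "length xs = n - 1 \<Longrightarrow> length ys = n \<Longrightarrow>
    br (xs @ [br ys]) = (\<Sum>i<n. br (ys[i := br (xs @ [ys ! i])]))"
  using poisson_nlie unfolding poisson_nlie_def by blast

lemma leibniz: "length xs = n - 1 \<Longrightarrow> br ((y * z) # xs) = y * br (z # xs) + z * br (y # xs)"
  using poisson_nlie unfolding poisson_nlie_def by blast

lemma lin_mult_op: "lin (mult_op a)"
proof -
  have "a * (c *s v) = c *s (a * v)" for c v
    by (metis mult.commute scale_mult_left)
  then show ?thesis
    unfolding mult_op_def by (simp add: Vector_Spaces.linear_iff vector_space_axioms distrib_left)
qed

lemma lin_br_first: "length xs = n - 1 \<Longrightarrow> lin (\<lambda>v. br (v # xs))"
  using lin_br_nth[of "0 # xs" 0] two_le_n by simp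

lemma lin_br_last:
  assumes "length xs = n - 1"
  shows "lin (\<lambda>v. br (xs @ [v]))"
proof -
  have "(xs @ [0])[n - 1 := v] = xs @ [v]" for v
    using assms by (simp add: list_update_append)
  then show ?thesis
    using lin_br_nth[of "xs @ [0]" "n - 1"] two_le_n assms by simp
qed

lemma br_eq_0:
  assumes "length xs = n" "i < n" "xs ! i = 0"
  shows "br xs = 0"
  using endo.linear_0[OF lin_br_nth[OF assms(1,2)]] list_update_id[of xs i] assms(3) by simp

lemma br_swap_mem:
  assumes "subspace I" "length xs = n" "i < n" "j < n"
  shows "br (xs[i := xs ! j, j := xs ! i]) \<in> I \<longleftrightarrow> br xs \<in> I"
  using br_swap[OF assms(2-4)] subspace_neg[OF assms(1)] by (cases "i = j") force+

lemma br_swap_first_last: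
  assumes "length bs = n - 2"
  shows "br (v # bs @ [l]) = - br (l # bs @ [v])"
proof -
  obtain m where m: "n = Suc (Suc m)"
    using two_le_n by (metis add_2_eq_Suc le_Suc_ex)
  have "(v # bs @ [l])[0 := (v # bs @ [l]) ! (n - 1), n - 1 := (v # bs @ [l]) ! 0] = l # bs @ [v]"
    using assms m by (simp add: nth_append list_update_append)
  then show ?thesis
    using br_swap[of "v # bs @ [l]" 0 "n - 1"] assms two_le_n by simp
qed

lemma obtain_Cons_args:
  assumes "length xs = n - 1"
  obtains l bs where "xs = l # bs" "length bs = n - 2"
  using assms two_le_n by (cases xs) auto

lemma obtain_snoc_args:
  assumes "length xs = n - 1"
  obtains bs l where "xs = bs @ [l]" "length bs = n - 2"
  using assms two_le_n by (cases xs rule: rev_cases) auto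

lemma leibniz_last:
  assumes "length xs = n - 1"
  shows "br (xs @ [y * z]) = y * br (xs @ [z]) + z * br (xs @ [y])"
proof -
  obtain l bs where xs: "xs = l # bs" "length bs = n - 2"
    using assms by (rule obtain_Cons_args)
  have len: "length (bs @ [l]) = n - 1"
    using xs(2) two_le_n by simp
  have "br (xs @ [y * z]) = - br ((y * z) # bs @ [l])"
    using br_swap_first_last[OF xs(2), of l "y * z"] xs(1) by simp
  also have "\<dots> = - (y * br (z # bs @ [l]) + z * br (y # bs @ [l]))"
    using leibniz[OF len] by simp
  also have "\<dots> = y * br (xs @ [z]) + z * br (xs @ [y])"
    unfolding br_swap_first_last[OF xs(2), of z l] br_swap_first_last[OF xs(2), of y l] xs(1)
    by (simp add: algebra_simps)
  finally show ?thesis .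
qed

lemma br_mem_ideal:
  assumes I: "is_ideal I" and xs: "length xs = n" "i < n" "xs ! i \<in> I"
  shows "br xs \<in> I"
proof -
  have n: "0 < n"
    using two_le_n by simp
  define ys where "ys = xs[0 := xs ! i, i := xs ! 0]"
  have "length ys = n" "ys ! 0 = xs ! i"
    using xs n by (auto simp: ys_def nth_list_update)
  then have "ys = xs ! i # tl ys" "length (tl ys) = n - 1"
    using n by (cases ys; simp)+
  then have "br ys \<in> I"
    using I xs(3) unfolding pn_ideal_def by metis
  then show ?thesis
    using br_swap_mem[OF _ xs(1) n xs(2)] I unfolding ys_def pn_ideal_def by blast
qed

lemma derived_Suc:
  "der (Suc k) = span ({br (a # b # zs) | a b zs. a \<in> der k \<and> b \<in> der k \<and> length zs = n - 2}
      \<union> {a * b | a b. a \<in> der k \<and> b \<in> der k})"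
  by simp

declare derived.simps(2) [simp del]

lemma subspace_derived_Suc: "subspace (der (Suc k))"
  unfolding derived_Suc by (rule subspace_span)

lemma br_mem_derived_Suc_01:
  assumes "length ys = n" "ys ! 0 \<in> der k" "ys ! 1 \<in> der k"
  shows "br ys \<in> der (Suc k)"
proof -
  obtain a b zs where ys: "ys = a # b # zs"
    using assms(1) two_le_n by (cases ys; cases "tl ys") auto
  have "a \<in> der k" "b \<in> der k" "length zs = n - 2"
    using assms unfolding ys by auto
  then have "br ys \<in> {br (a # b # zs) | a b zs. a \<in> der k \<and> b \<in> der k \<and> length zs = n - 2}"
    unfolding ys by blast
  then show ?thesis
    unfolding derived_Suc by (rule span_base[OF UnI1])
qed

lemma lin_image_derived_Suc:
  assumes T: "lin T" and x: "x \<in> der (Suc k)"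
    and br: "\<And>a b zs. a \<in> der k \<Longrightarrow> b \<in> der k \<Longrightarrow> length zs = n - 2 \<Longrightarrow>
      T (br (a # b # zs)) \<in> der (Suc k)"
    and mult: "\<And>a b. a \<in> der k \<Longrightarrow> b \<in> der k \<Longrightarrow> T (a * b) \<in> der (Suc k)"
  shows "T x \<in> der (Suc k)"
  by (rule lin_mem_subspace_of_span[OF T subspace_derived_Suc _ x[unfolded derived_Suc]])
    (use br mult in blast)

lemma mult_mem_derived_Suc:
  assumes "x \<in> der k" "y \<in> der k"
  shows "x * y \<in> der (Suc k)"
  unfolding derived_Suc by (rule span_base) (use assms in blast)

lemma derived_Suc_mult_closed:
  assumes IH: "is_ideal (der k)" and x: "x \<in> der (Suc k)"
  shows "p * x \<in> der (Suc k)"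
  using lin_mult_op x unfolding mult_op_def
proof (rule lin_image_derived_Suc[where T = "\<lambda>v. p * v"])
  fix a b :: 'v and zs :: "'v list"
  assume ab: "a \<in> der k" "b \<in> der k" and zs: "length zs = n - 2"
  have "length (b # zs) = n - 1"
    using zs two_le_n by simp
  then have eq: "p * br (a # b # zs) = br ((p * a) # b # zs) - a * br (p # b # zs)"
    using leibniz[of "b # zs" p a] by (simp add: algebra_simps)
  have "p * a \<in> der k"
    using IH ab(1) unfolding pn_ideal_def by blast
  then have "br ((p * a) # b # zs) \<in> der (Suc k)"
    using ab(2) zs two_le_n by (intro br_mem_derived_Suc_01) auto
  moreover have "br (p # b # zs) \<in> der k"
    using ab(2) zs two_le_n by (intro br_mem_ideal[OF IH, of _ 1]) auto
  then have "a * br (p # b # zs) \<in> der (Suc k)"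
    by (rule mult_mem_derived_Suc[OF ab(1)])
  ultimately show "p * br (a # b # zs) \<in> der (Suc k)"
    unfolding eq by (rule subspace_diff[OF subspace_derived_Suc])
next
  fix a b assume "a \<in> der k" "b \<in> der k"
  then have "(p * a) * b \<in> der (Suc k)"
    using IH unfolding pn_ideal_def by (blast intro: mult_mem_derived_Suc)
  then show "p * (a * b) \<in> der (Suc k)"
    by (simp add: mult.assoc)
qed

lemma derived_Suc_br_closed:
  assumes IH: "is_ideal (der k)" and x: "x \<in> der (Suc k)" and xs: "length xs = n - 1"
  shows "br (x # xs) \<in> der (Suc k)"
  using lin_br_first[OF xs] x
proof (rule lin_image_derived_Suc[where T = "\<lambda>v. br (v # xs)"])
  fix a b :: 'v and zs :: "'v list"
  assume ab: "a \<in> der k" "b \<in> der k" and zs: "length zs = n - 2"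
  obtain bs l where bl: "xs = bs @ [l]" "length bs = n - 2"
    using xs by (rule obtain_snoc_args)
  define ys where "ys = a # b # zs"
  have ly: "length ys = n" and lx: "length (l # bs) = n - 1"
    using zs bl(2) two_le_n unfolding ys_def by auto
  have "br (br ys # xs) = - (\<Sum>i<n. br (ys[i := br ((l # bs) @ [ys ! i])]))"
    using br_swap_first_last[OF bl(2), of "br ys" l] fundamental_identity[OF lx ly] unfolding bl(1)
    by simp
  moreover have "br (ys[i := br ((l # bs) @ [ys ! i])]) \<in> der (Suc k)" if i: "i < n" for i
  proof (rule br_mem_derived_Suc_01)
    have closed: "br ((l # bs) @ [c]) \<in> der k" if "c \<in> der k" for c
      using that lx two_le_n by (intro br_mem_ideal[OF IH, of _ "n - 1"]) (auto simp: nth_append)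
    have "ys ! 0 \<in> der k" "ys ! 1 \<in> der k"
      using ab by (simp_all add: ys_def)
    moreover have "ys[i := br ((l # bs) @ [ys ! i])] ! j = (if i = j then br ((l # bs) @ [ys ! j]) else ys ! j)"
      for j
      using i ly by (simp add: nth_list_update)
    ultimately show "ys[i := br ((l # bs) @ [ys ! i])] ! 0 \<in> der k"
      "ys[i := br ((l # bs) @ [ys ! i])] ! 1 \<in> der k"
      using closed by auto
  qed (use ly in simp)
  then have "(\<Sum>i<n. br (ys[i := br ((l # bs) @ [ys ! i])])) \<in> der (Suc k)"
    by (intro subspace_sum[OF subspace_derived_Suc]) simp
  ultimately show "br (br (a # b # zs) # xs) \<in> der (Suc k)"
    unfolding ys_def using subspace_neg[OF subspace_derived_Suc] by simp
next
  fix a b assume ab: "a \<in> der k" "b \<in> der k"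
  have "br (b # xs) \<in> der k" "br (a # xs) \<in> der k"
    using IH ab xs unfolding pn_ideal_def by blast+
  then have "a * br (b # xs) + b * br (a # xs) \<in> der (Suc k)"
    using ab by (intro subspace_add[OF subspace_derived_Suc] mult_mem_derived_Suc)
  then show "br ((a * b) # xs) \<in> der (Suc k)"
    using leibniz[OF xs] by simp
qed

lemma derived_ideal: "is_ideal (der k)"
proof (induction k)
  case 0
  then show ?case by (simp add: pn_ideal_def)
next
  case (Suc k)
  then show ?case
    unfolding pn_ideal_def[of _ _ _ "der (Suc k)"]
    using subspace_derived_Suc derived_Suc_mult_closed derived_Suc_br_closed by blast
qed

lemma br_mem_derived_Suc:
  assumes xs: "length xs = n" "i < n" "j < n" "i \<noteq> j" "xs ! i \<in> der k" "xs ! j \<in> der k"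
  shows "br xs \<in> der (Suc k)"
proof -
  have n: "0 < n" "1 < n"
    using two_le_n by auto
  define j' where "j' = (if j = 0 then i else j)"
  define ys where "ys = xs[0 := xs ! i, i := xs ! 0]"
  define zs where "zs = ys[1 := ys ! j', j' := ys ! 1]"
  have ys: "length ys = n" "ys ! 0 = xs ! i" "ys ! j' = xs ! j" "j' < n" "j' \<noteq> 0"
    using xs n by (auto simp: ys_def j'_def nth_list_update)
  have "length zs = n" "zs ! 0 = xs ! i" "zs ! 1 = xs ! j"
    using ys n by (auto simp: zs_def nth_list_update)
  then have "br zs \<in> der (Suc k)"
    using xs(5,6) by (intro br_mem_derived_Suc_01) auto
  then have "br ys \<in> der (Suc k)"
    unfolding zs_def using br_swap_mem[OF subspace_derived_Suc ys(1) n(2) ys(4)] by blast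
  then show ?thesis
    unfolding ys_def using br_swap_mem[OF subspace_derived_Suc xs(1) n(1) xs(2)] by blast
qed

definition ad :: "'v list \<Rightarrow> 'v \<Rightarrow> 'v" where
  "ad xs = (\<lambda>v. br (xs @ [v]))"

lemma lin_ad: "length xs = n - 1 \<Longrightarrow> lin (ad xs)"
  unfolding ad_def by (rule lin_br_last)

lemma commutator_ad_mult:
  "length xs = n - 1 \<Longrightarrow> commutator (ad xs) (mult_op b) = mult_op (br (xs @ [b]))"
  by (simp add: commutator_def ad_def mult_op_def fun_eq_iff leibniz_last mult.commute)

lemma commutator_mult_ad:
  "length ys = n - 1 \<Longrightarrow> commutator (mult_op a) (ad ys) = (\<lambda>v. (-1) *s mult_op (br (ys @ [a])) v)"
  by (simp add: commutator_def ad_def mult_op_def fun_eq_iff leibniz_last mult.commute scale_minus_left)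

lemma commutator_ad_ad:
  assumes xs: "length xs = n - 1" and ys: "length ys = n - 1"
  shows "commutator (ad xs) (ad ys) = (\<lambda>v. \<Sum>i<n - 1. ad (ys[i := br (xs @ [ys ! i])]) v)"
proof
  fix v
  have n: "n = Suc (n - 1)"
    using two_le_n by simp
  have "br (xs @ [br (ys @ [v])]) = (\<Sum>i<n. br ((ys @ [v])[i := br (xs @ [(ys @ [v]) ! i])]))"
    using fundamental_identity[OF xs] ys two_le_n by simp
  also have "\<dots> = (\<Sum>i<n - 1. br ((ys @ [v])[i := br (xs @ [(ys @ [v]) ! i])]))
      + br ((ys @ [v])[n - 1 := br (xs @ [(ys @ [v]) ! (n - 1)])])"
    by (subst n, subst sum.lessThan_Suc) simp
  also have "(\<Sum>i<n - 1. br ((ys @ [v])[i := br (xs @ [(ys @ [v]) ! i])]))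
      = (\<Sum>i<n - 1. ad (ys[i := br (xs @ [ys ! i])]) v)"
    by (rule sum.cong) (use ys in \<open>auto simp: ad_def nth_append list_update_append\<close>)
  also have "br ((ys @ [v])[n - 1 := br (xs @ [(ys @ [v]) ! (n - 1)])]) = br (ys @ [br (xs @ [v])])"
    using ys by (simp add: nth_append list_update_append)
  finally show "commutator (ad xs) (ad ys) v = (\<Sum>i<n - 1. ad (ys[i := br (xs @ [ys ! i])]) v)"
    by (simp add: commutator_def ad_def)
qed



definition basic_ops :: "'v set \<Rightarrow> ('v \<Rightarrow> 'v) set" where
  "basic_ops I = {mult_op a | a. a \<in> I} \<union> {ad xs | xs. length xs = n - 1 \<and> (\<exists>i<n - 1. xs ! i \<in> I)}"

definition ad_two_derived :: "nat \<Rightarrow> ('v \<Rightarrow> 'v) set" where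
  "ad_two_derived k = {ad xs | xs. length xs = n - 1 \<and>
     (\<exists>i<n - 1. \<exists>j<n - 1. i \<noteq> j \<and> xs ! i \<in> der k \<and> xs ! j \<in> der k)}"

lemma basic_ops_cases:
  assumes "T \<in> basic_ops I"
  obtains a where "T = mult_op a" "a \<in> I"
  | xs i where "T = ad xs" "length xs = n - 1" "i < n - 1" "xs ! i \<in> I"
  using assms unfolding basic_ops_def by blast

lemma mult_op_mem_basic_ops: "a \<in> I \<Longrightarrow> mult_op a \<in> basic_ops I"
  unfolding basic_ops_def by blast

lemma ad_mem_basic_ops: "length xs = n - 1 \<Longrightarrow> i < n - 1 \<Longrightarrow> xs ! i \<in> I \<Longrightarrow> ad xs \<in> basic_ops I"
  unfolding basic_ops_def by blast

lemma ad_mem_basic_ops_UNIV: "length xs = n - 1 \<Longrightarrow> ad xs \<in> basic_ops UNIV"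
  using two_le_n by (intro ad_mem_basic_ops[of _ 0]) auto

lemma basic_ops_subset_UNIV: "basic_ops I \<subseteq> basic_ops UNIV"
  unfolding basic_ops_def by blast

lemma ad_two_derived_subset: "ad_two_derived k \<subseteq> basic_ops UNIV"
  unfolding ad_two_derived_def using ad_mem_basic_ops_UNIV by blast

lemma lin_basic_ops: "T \<in> basic_ops I \<Longrightarrow> lin T"
  by (erule basic_ops_cases) (auto simp: lin_mult_op lin_ad)

lemma ideal_iff_basic_ops_invariant:
  "is_ideal I \<longleftrightarrow> subspace I \<and> (\<forall>T\<in>basic_ops UNIV. T ` I \<subseteq> I)"
proof
  assume I: "is_ideal I"
  have "T ` I \<subseteq> I" if "T \<in> basic_ops UNIV" for T
    using that
  proof (cases rule: basic_ops_cases)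
    case (1 a)
    then show ?thesis
      using I unfolding pn_ideal_def mult_op_def by blast
  next
    case (2 xs)
    have "br (xs @ [u]) \<in> I" if "u \<in> I" for u
      using 2 that two_le_n by (intro br_mem_ideal[OF I, of _ "n - 1"]) (auto simp: nth_append)
    then show ?thesis
      unfolding 2(1) ad_def by blast
  qed
  then show "subspace I \<and> (\<forall>T\<in>basic_ops UNIV. T ` I \<subseteq> I)"
    using I unfolding pn_ideal_def by blast
next
  assume I: "subspace I \<and> (\<forall>T\<in>basic_ops UNIV. T ` I \<subseteq> I)"
  have "br (x # xs) \<in> I" if x: "x \<in> I" and xs: "length xs = n - 1" for x xs
  proof -
    obtain bs l where bl: "xs = bs @ [l]" "length bs = n - 2"
      using xs by (rule obtain_snoc_args)
    have "length (l # bs) = n - 1"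
      using bl(2) two_le_n by simp
    then have "ad (l # bs) x \<in> I"
      using I x ad_mem_basic_ops_UNIV by blast
    then show ?thesis
      using br_swap_first_last[OF bl(2), of x l] subspace_neg[of I] I unfolding bl(1) ad_def by auto
  qed
  moreover have "p * x \<in> I" if "x \<in> I" for p x
    using I that mult_op_mem_basic_ops[of p UNIV] unfolding mult_op_def by blast
  ultimately show "is_ideal I"
    using I unfolding pn_ideal_def by blast
qed

lemma ideal_span_insert:
  assumes J: "is_ideal J" and v: "\<And>T. T \<in> basic_ops UNIV \<Longrightarrow> \<exists>c. T v - c *s v \<in> J"
  shows "is_ideal (span (insert v J))"
proof -
  have "T ` insert v J \<subseteq> span (insert v J)" if T: "T \<in> basic_ops UNIV" for T
  proof -
    obtain c where c: "T v - c *s v \<in> J"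
      using v[OF T] by blast
    have "T v = (T v - c *s v) + c *s v" by simp
    also have "\<dots> \<in> span (insert v J)"
      using c by (intro span_add span_scale) (auto intro: span_base)
    finally have "T v \<in> span (insert v J)" .
    moreover have "T ` J \<subseteq> span (insert v J)"
      using J T span_superset unfolding ideal_iff_basic_ops_invariant by blast
    ultimately show ?thesis by blast
  qed
  then have "T ` span (insert v J) \<subseteq> span (insert v J)" if "T \<in> basic_ops UNIV" for T
    using lin_mem_subspace_of_span[OF lin_basic_ops[OF that] subspace_span] that by blast
  then show ?thesis
    unfolding ideal_iff_basic_ops_invariant by auto
qed

lemma ideal_zero: "is_ideal {0}"
  unfolding ideal_iff_basic_ops_invariant
  using lin_basic_ops endo.linear_0 by auto

lemma commutator_ad_basic_ops:
  assumes xs: "length xs = n - 1" and I: "\<And>c. br (xs @ [c]) \<in> I" and x: "x \<in> basic_ops UNIV"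
  shows "commutator (ad xs) x \<in> op_span (basic_ops I)"
  using x
proof (cases rule: basic_ops_cases)
  case (1 b)
  then show ?thesis
    using commutator_ad_mult[OF xs] I by (simp add: op_span.base mult_op_mem_basic_ops)
next
  case (2 ys)
  have "ad (ys[i := br (xs @ [ys ! i])]) \<in> op_span (basic_ops I)" if "i < n - 1" for i
    using that 2 I by (intro op_span.base ad_mem_basic_ops[of _ i]) auto
  then have "(\<lambda>v. \<Sum>i<n - 1. ad (ys[i := br (xs @ [ys ! i])]) v) \<in> op_span (basic_ops I)"
    by (intro op_span_sum) auto
  then show ?thesis
    using commutator_ad_ad[OF xs 2(2)] 2(1) by simp
qed

lemma commutator_mult_basic_ops:
  assumes I: "is_ideal I" and a: "a \<in> I" and x: "x \<in> basic_ops UNIV"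
  shows "commutator (mult_op a) x \<in> op_span (basic_ops I)"
  using x
proof (cases rule: basic_ops_cases)
  case (1 b)
  then show ?thesis
    by (simp add: commutator_mult_op op_span.zero)
next
  case (2 ys)
  have "br (ys @ [a]) \<in> I"
    using 2 a two_le_n by (intro br_mem_ideal[OF I, of _ "n - 1"]) (auto simp: nth_append)
  then have "(\<lambda>v. (-1) *s mult_op (br (ys @ [a])) v) \<in> op_span (basic_ops I)"
    by (intro op_span.scale op_span.base mult_op_mem_basic_ops)
  then show ?thesis
    using commutator_mult_ad[OF 2(2)] 2(1) by simp
qed

lemma commutator_basic_ops_ideal:
  assumes I: "is_ideal I" and T: "T \<in> basic_ops I" and x: "x \<in> basic_ops UNIV"
  shows "commutator T x \<in> op_span (basic_ops I)"
  using T
proof (cases rule: basic_ops_cases)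
  case (1 a)
  then show ?thesis
    using commutator_mult_basic_ops[OF I _ x] by simp
next
  case (2 xs i)
  have "br (xs @ [c]) \<in> I" for c
    using 2 two_le_n by (intro br_mem_ideal[OF I, of _ i]) (auto simp: nth_append)
  then show ?thesis
    using commutator_ad_basic_ops[OF 2(2) _ x] 2(1) by simp
qed

lemma commutator_ad_two_derived:
  assumes T: "T \<in> ad_two_derived k" and x: "x \<in> basic_ops UNIV"
  shows "commutator T x \<in> op_span (basic_ops (der (Suc k)))"
proof -
  obtain xs i j where xs: "T = ad xs" "length xs = n - 1" "i < n - 1" "j < n - 1" "i \<noteq> j"
    "xs ! i \<in> der k" "xs ! j \<in> der k"
    using T unfolding ad_two_derived_def by blast
  have "br (xs @ [c]) \<in> der (Suc k)" for c
    using xs two_le_n by (intro br_mem_derived_Suc[of _ i j]) (auto simp: nth_append)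
  then show ?thesis
    using commutator_ad_basic_ops[OF xs(2) _ x] xs(1) by simp
qed

lemma commutator_ad_ad_derived:
  assumes xs: "length xs = n - 1" "i < n - 1" "xs ! i \<in> der k"
    and ys: "length ys = n - 1" "j < n - 1" "ys ! j \<in> der k"
  shows "commutator (ad xs) (ad ys) \<in> op_span (basic_ops (der (Suc k)) \<union> ad_two_derived k)"
proof -
  have "ad (ys[l := br (xs @ [ys ! l])]) \<in> op_span (basic_ops (der (Suc k)) \<union> ad_two_derived k)"
    if l: "l < n - 1" for l
  proof (cases "l = j")
    case True
    have "br (xs @ [ys ! l]) \<in> der (Suc k)"
      using xs ys True two_le_n by (intro br_mem_derived_Suc[of _ i "n - 1"]) (auto simp: nth_append)
    then have "ad (ys[l := br (xs @ [ys ! l])]) \<in> basic_ops (der (Suc k))"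
      using l ys by (intro ad_mem_basic_ops[of _ l]) auto
    then show ?thesis by (blast intro: op_span.base)
  next
    case False
    have "br (xs @ [ys ! l]) \<in> der k"
      using xs two_le_n by (intro br_mem_ideal[OF derived_ideal, of _ i]) (auto simp: nth_append)
    then have "ad (ys[l := br (xs @ [ys ! l])]) \<in> ad_two_derived k"
      unfolding ad_two_derived_def using l ys False by fastforce
    then show ?thesis by (blast intro: op_span.base)
  qed
  then have "(\<lambda>v. \<Sum>l<n - 1. ad (ys[l := br (xs @ [ys ! l])]) v)
      \<in> op_span (basic_ops (der (Suc k)) \<union> ad_two_derived k)"
    by (intro op_span_sum) auto
  then show ?thesis
    using commutator_ad_ad[OF xs(1) ys(1)] by simp
qed

lemma commutator_basic_ops_derived:
  assumes a: "a \<in> basic_ops (der k)" and b: "b \<in> basic_ops (der k)"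
  shows "commutator a b \<in> op_span (basic_ops (der (Suc k)) \<union> ad_two_derived k)"
  using a
proof (cases rule: basic_ops_cases)
  case a': (1 a')
  show ?thesis
    using b
  proof (cases rule: basic_ops_cases)
    case (1 b')
    then show ?thesis
      using a' by (simp add: commutator_mult_op op_span.zero)
  next
    case (2 ys j)
    have "br (ys @ [a']) \<in> der (Suc k)"
      using 2 a' two_le_n by (intro br_mem_derived_Suc[of _ j "n - 1"]) (auto simp: nth_append)
    then have "(\<lambda>v. (-1) *s mult_op (br (ys @ [a'])) v) \<in> op_span (basic_ops (der (Suc k)) \<union> ad_two_derived k)"
      by (blast intro: op_span.scale op_span.base mult_op_mem_basic_ops)
    then show ?thesis
      using commutator_mult_ad[OF 2(2)] 2(1) a'(1) by simp
  qed
next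
  case a': (2 xs i)
  show ?thesis
    using b
  proof (cases rule: basic_ops_cases)
    case (1 b')
    have "br (xs @ [b']) \<in> der (Suc k)"
      using 1 a' two_le_n by (intro br_mem_derived_Suc[of _ i "n - 1"]) (auto simp: nth_append)
    then have "mult_op (br (xs @ [b'])) \<in> op_span (basic_ops (der (Suc k)) \<union> ad_two_derived k)"
      by (blast intro: op_span.base mult_op_mem_basic_ops)
    then show ?thesis
      using commutator_ad_mult[OF a'(2)] 1(1) a'(1) by simp
  next
    case (2 ys j)
    then show ?thesis
      using commutator_ad_ad_derived[OF a'(2-4) 2(2-4)] a'(1) by simp
  qed
qed

(* The odd steps are needed because the commutator of ad xs and ad ys, each with an argument in
   der k, contains terms ad zs with two arguments in der k but none in der (Suc k). *)
definition op_series :: "nat \<Rightarrow> ('v \<Rightarrow> 'v) set" where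
  "op_series j = basic_ops (der ((j + 1) div 2)) \<union> (if odd j then ad_two_derived (j div 2) else {})"

lemma op_series_even: "op_series (2 * k) = basic_ops (der k)"
  by (simp add: op_series_def)

lemma op_series_odd: "op_series (Suc (2 * k)) = basic_ops (der (Suc k)) \<union> ad_two_derived k"
  by (simp add: op_series_def)

lemma op_series_subset: "op_series j \<subseteq> basic_ops UNIV"
  unfolding op_series_def using basic_ops_subset_UNIV ad_two_derived_subset by auto

lemma lin_op_series: "T \<in> op_series j \<Longrightarrow> lin T"
  using op_series_subset lin_basic_ops by blast

lemma commutator_op_series_basic_ops:
  assumes T: "T \<in> op_series j" and x: "x \<in> basic_ops UNIV"
  shows "commutator T x \<in> op_span (op_series j)"
proof (cases "even j")
  case True
  then obtain k where j: "j = 2 * k" by (rule evenE)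
  then show ?thesis
    using commutator_basic_ops_ideal[OF derived_ideal _ x] T by (simp add: op_series_even)
next
  case False
  then obtain k where j: "j = Suc (2 * k)" by (metis oddE add.commute plus_1_eq_Suc)
  have "commutator T x \<in> op_span (basic_ops (der (Suc k)))"
    using T commutator_basic_ops_ideal[OF derived_ideal _ x] commutator_ad_two_derived[OF _ x]
    unfolding j op_series_odd by blast
  then show ?thesis
    unfolding j op_series_odd by (rule op_span_mono[rotated]) blast
qed

lemma commutator_op_series_ideal:
  "T \<in> op_span (op_series j) \<Longrightarrow> x \<in> op_span (basic_ops UNIV) \<Longrightarrow>
    commutator T x \<in> op_span (op_series j)"
  by (rule commutator_op_span[OF lin_op_series lin_basic_ops commutator_op_series_basic_ops])

lemma commutator_op_series_Suc:
  assumes "a \<in> op_span (op_series j)" "b \<in> op_span (op_series j)"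
  shows "commutator a b \<in> op_span (op_series (Suc j))"
proof (rule commutator_op_span[OF lin_op_series lin_op_series _ assms(2,1)])
  fix a b assume a: "a \<in> op_series j" and b: "b \<in> op_series j"
  show "commutator a b \<in> op_span (op_series (Suc j))"
  proof (cases "even j")
    case True
    then obtain k where j: "j = 2 * k" by (rule evenE)
    then show ?thesis
      using commutator_basic_ops_derived a b by (simp add: op_series_even op_series_odd)
  next
    case False
    then obtain k where j: "j = Suc (2 * k)" by (metis oddE add.commute plus_1_eq_Suc)
    have "b \<in> basic_ops UNIV"
      using b op_series_subset by blast
    then have "commutator a b \<in> op_span (basic_ops (der (Suc k)))"
      using a commutator_basic_ops_ideal[OF derived_ideal] commutator_ad_two_derived
      unfolding j op_series_odd by blast
    moreover have "op_series (Suc j) = basic_ops (der (Suc k))"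
      unfolding j using op_series_even[of "Suc k"] by simp
    ultimately show ?thesis
      by simp
  qed
qed

lemma op_series_vanishes:
  assumes "der s = {0}" and T: "T \<in> op_span (op_series (2 * s))"
  shows "T v = 0"
proof (rule op_span_vanishes[OF _ T])
  fix a v assume "a \<in> op_series (2 * s)"
  then have "a \<in> basic_ops {0}"
    using assms(1) by (simp add: op_series_even)
  then show "a v = 0"
  proof (cases rule: basic_ops_cases)
    case (1 c)
    then show ?thesis by (simp add: mult_op_def)
  next
    case (2 xs i)
    then show ?thesis
      using two_le_n by (auto simp: ad_def nth_append intro: br_eq_0[of _ i])
  qed
qed

end

locale fin_dim_poisson_nlie_algebra =
  poisson_nlie_algebra scale n br + fin_dim_alg_closed_space scale Basis
  for scale :: "'k::field_char_0 \<Rightarrow> 'v::comm_ring \<Rightarrow> 'v" (infixr "*s" 75)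
    and n :: nat and br :: "'v list \<Rightarrow> 'v" and Basis :: "'v set"
begin

lemma ideal_extension:
  assumes J: "is_ideal J" "J \<noteq> UNIV" and solvable: "der s = {0}"
  shows "\<exists>v. v \<notin> J \<and> is_ideal (span (insert v J))"
proof -
  have sJ: "subspace J" and ops_J: "\<And>T. T \<in> basic_ops UNIV \<Longrightarrow> T ` J \<subseteq> J"
    using J(1) unfolding ideal_iff_basic_ops_invariant by auto
  have "\<exists>v. v \<notin> J \<and> (\<forall>T\<in>op_span (op_series 0). \<exists>c. T v - c *s v \<in> J)"
  proof (rule lie_theorem_mod[where g = "op_span (basic_ops UNIV)" and s = "2 * s"])
    show "lin x" if "x \<in> op_span (basic_ops UNIV)" for x
      using lin_op_span[OF lin_basic_ops that] .
    show "x ` J \<subseteq> J" if "x \<in> op_span (basic_ops UNIV)" for x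
      using op_span_image_subset[OF sJ ops_J that] .
    show "op_span (op_series j) \<subseteq> op_span (basic_ops UNIV)" for j
      using op_span_mono[OF op_series_subset] by blast
    show "T v = 0" if "T \<in> op_span (op_series (2 * s))" for T v
      using op_series_vanishes[OF solvable that] .
  qed (use sJ J(2) commutator_op_series_ideal commutator_op_series_Suc in auto)
  then obtain v where v: "v \<notin> J" "\<And>T. T \<in> basic_ops UNIV \<Longrightarrow> \<exists>c. T v - c *s v \<in> J"
    using op_series_even[of 0] op_span.base by fastforce
  then show ?thesis
    using ideal_span_insert[OF J(1)] by blast
qed

lemma ideal_chain:
  assumes solvable: "der s = {0}"
  shows "i \<le> dim UNIV \<Longrightarrow> \<exists>P. P 0 = {0} \<and> (\<forall>k<i. P k \<subset> P (Suc k)) \<and>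
    (\<forall>k\<le>i. is_ideal (P k) \<and> dim (P k) = k)"
proof (induction i)
  case 0
  show ?case
    using ideal_zero by (intro exI[of _ "\<lambda>_. {0}"]) simp
next
  case (Suc i)
  then obtain P where P: "P 0 = {0}" "\<forall>k<i. P k \<subset> P (Suc k)" "\<forall>k\<le>i. is_ideal (P k) \<and> dim (P k) = k"
    by auto
  have "P i \<noteq> UNIV"
    using P(3) Suc.prems by auto
  then obtain v where v: "v \<notin> P i" "is_ideal (span (insert v (P i)))"
    using ideal_extension[OF _ _ solvable] P(3) by blast
  have "subspace (P i)"
    using P(3) unfolding pn_ideal_def by blast
  then have span_P: "span (P i) = P i"
    by (simp add: span_eq_iff)
  have "dim (span (insert v (P i))) = Suc i"
    using v(1) P(3) by (simp add: dim_insert span_P)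
  moreover have "P i \<subset> span (insert v (P i))"
    using v(1) span_superset[of "insert v (P i)"] by blast
  ultimately show ?case
    using P v(2) by (intro exI[of _ "P(Suc i := span (insert v (P i)))"]) (auto simp: less_Suc_eq le_Suc_eq)
qed

theorem ideal_flag:
  assumes "der s = {0}"
  shows "\<exists>P. P 0 = {0} \<and> P (dim UNIV) = UNIV \<and> (\<forall>i<dim UNIV. P i \<subset> P (Suc i)) \<and>
    (\<forall>i\<le>dim UNIV. is_ideal (P i) \<and> dim (P i) = i)"
proof -
  obtain P where P: "P 0 = {0}" "\<forall>i<dim UNIV. P i \<subset> P (Suc i)"
    "\<forall>i\<le>dim UNIV. is_ideal (P i) \<and> dim (P i) = i"
    using ideal_chain[OF assms order_refl] by blast
  have "P (dim UNIV) = UNIV"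
    using P(3) by (intro subspace_dim_equal) (auto simp: pn_ideal_def)
  with P show ?thesis by blast
qed

end

theorem corollary5p8:
  fixes scale :: "'k::field_char_0 \<Rightarrow> 'v::comm_ring \<Rightarrow> 'v"
    and n m :: nat and br :: "'v list \<Rightarrow> 'v"
  assumes "alg_closed TYPE('k)"
    and "poisson_nlie scale n br"
    and "\<exists>B. finite B \<and> module.span scale B = UNIV"
    and "vector_space.dim scale UNIV = m"
    and "pn_solvable scale n br"
  shows "\<exists>P :: nat \<Rightarrow> 'v set. P 0 = {0} \<and> P m = UNIV \<and>
           (\<forall>i<m. P i \<subset> P (Suc i)) \<and>
           (\<forall>i\<le>m. pn_ideal scale n br (P i) \<and> vector_space.dim scale (P i) = i)"
proof -
  interpret vector_space scale
    using assms(2) unfolding poisson_nlie_def by blast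
  obtain B where B: "finite B" "span B = UNIV"
    using assms(3) by blast
  obtain Basis where Basis: "independent Basis" "span Basis = UNIV"
    using basis_exists[of UNIV] by (metis span_UNIV subset_antisym top_greatest span_mono)
  have "finite Basis"
    using independent_span_bound[OF B(1) Basis(1)] B(2) by auto
  interpret fin_dim_poisson_nlie_algebra scale n br Basis
    by unfold_locales (use assms(1,2) Basis \<open>finite Basis\<close> in auto)
  obtain s where "der s = {0}"
    using assms(5) unfolding pn_solvable_def by blast
  then show ?thesis
    using ideal_flag unfolding assms(4) by blast
qed

end
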